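(* Let $P_F$ denote the joint distribution, in a population of healthcare-seeking individuals, of the random variables $(A, Y, W, D, S, \Delta, X)$, where $A\in\{0,1\}$ is a binary exposure (vaccination status or dichotomized immune marker level at the time of potential SARS-CoV-2 exposure), $Y\in\{0,1\}$ indicates SARS-CoV-2 infection, $W\in\{0,1\}$ indicates a cause other than SARS-CoV-2 that could induce symptoms, $D\in\{0,1\}$ indicates meeting the symptom definition, $S\in\{0,1\}$ indicates obtaining SARS-CoV-2 testing (and hence enrollment in the test-negative design (TND) study when $D=1$), $\Delta\in\{0,1\}$ indicates that the exposure is observed, and $X\in\mathbb{R}^r$ are covariates. Let $P$ denote the distribution of the data as recorded in the TND study (exposure status recorded at testing and SARS-CoV-2 test result), and define $$\mu_P(y,x) := P(A=1\mid D=1,S=1,\Delta=1,Y=y,X=x),\qquad OR(P)(x):=\frac{\mu_P(1,x)/(1-\mu_P(1,x))}{\mu_P(0,x)/(1-\mu_P(0,x))}.$$ Assume: (1) $P\big(P(Y=1,D=1\mid S=1,X)>0\big)=1$ and $P\big(P(Y=0,D=1\mid S=1,X)>0\big)=1$; (2) $P\big(P(\Delta=1\mid D=1,S=1,Y,X)>0\big)=1$; (3) $P_F\big(P_F(S=1\mid D=1,Y,X)>0\big)=1$; (4) $S\perp\!\!\!\perp A\mid D=1,Y,X$; (5) $\Delta\perp\!\!\!\perp A\mid D=1,S=1,Y,X$; (6) (noncase exchangeability) $P_F(Y=0,D=1\mid A=1,X)=P_F(Y=0,D=1\mid A=0,X)$; (7) the exposure status recorded at SARS-CoV-2 testing accurately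 reflects the exposure status $A$ at the time of potential SARS-CoV-2 exposure in TND participants; (8) the SARS-CoV-2 test result accurately measures the infection status $Y$ in TND participants. Then $$OR(P)(x)=RR(P_F)(x):=\frac{P_F(Y=1,D=1\mid A=1,X=x)}{P_F(Y=1,D=1\mid A=0,X=x)}.$$
   Context: Test-negative design: individuals are enrolled if they meet the symptom definition ($D=1$) and obtain SARS-CoV-2 testing ($S=1$); cases test positive ($Y=1$) and noncases test negative ($Y=0$). The exposure $A$ is observed only for participants with $\Delta=1$ (missing either unintentionally or by a two-phase sampling design). $P_F$ is the full-data distribution over the healthcare-seeking population; $P$ is the distribution of the observed TND data. *)

theory Defs
  imports "HOL-Probability.Probability"
begin

text \<open>Outcome of one individual, apart from the covariates X.
  vA: exposure A; vY: SARS-CoV-2 infection Y; vW: other symptom cause W;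
  vD: meets symptom definition D; vS: obtains testing S; vDelta: exposure observed;
  vArec: exposure status as recorded at testing; vYrec: SARS-CoV-2 test result.\<close>
record indiv =
  vA :: bool
  vY :: bool
  vW :: bool
  vD :: bool
  vS :: bool
  vDelta :: bool
  vArec :: bool
  vYrec :: bool

definition pr :: "indiv pmf \<Rightarrow> (indiv \<Rightarrow> bool) \<Rightarrow> real" where
  "pr q E = measure_pmf.prob q {\<omega>. E \<omega>}"

definition cpr :: "indiv pmf \<Rightarrow> (indiv \<Rightarrow> bool) \<Rightarrow> (indiv \<Rightarrow> bool) \<Rightarrow> real" where
  "cpr q E C = pr q (\<lambda>\<omega>. E \<omega> \<and> C \<omega>) / pr q C"

text \<open>mu_P(y,x) = P(A=1 | D=1,S=1,Delta=1,Y=y,X=x), with A and Y the recorded values,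
  where q is the conditional law of the individual given X = x.\<close>
definition muP :: "indiv pmf \<Rightarrow> bool \<Rightarrow> real" where
  "muP q y = cpr q vArec (\<lambda>\<omega>. vD \<omega> \<and> vS \<omega> \<and> vDelta \<omega> \<and> vYrec \<omega> = y)"

definition ORP :: "indiv pmf \<Rightarrow> real" where
  "ORP q = (muP q True / (1 - muP q True)) / (muP q False / (1 - muP q False))"

definition RRF :: "indiv pmf \<Rightarrow> real" where
  "RRF q = cpr q (\<lambda>\<omega>. vY \<omega> \<and> vD \<omega>) vA / cpr q (\<lambda>\<omega>. vY \<omega> \<and> vD \<omega>) (\<lambda>\<omega>. \<not> vA \<omega>)"

end

theory Submission
  imports Defs
begin

text \<open>Accurate recording lets us replace the recorded exposure and test result by A and Y
  among participants. The two conditional independences then remove the conditioning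
  on \<open>\<Delta> = 1\<close> and on \<open>S = 1\<close>, so that \<open>\<mu>(y) = P(A = 1 | D = 1, Y = y)\<close> and the odds of
  \<open>\<mu>(y)\<close> are \<open>P(A = 1, D = 1, Y = y) / P(A = 0, D = 1, Y = y)\<close>. Noncase exchangeability
  says that the odds for \<open>y = 0\<close> equal \<open>P(A = 1) / P(A = 0)\<close>; dividing by them turns the
  odds ratio into the risk ratio.\<close>

lemma pr_cong_pmf:
  assumes "\<And>\<omega>. \<omega> \<in> set_pmf q \<Longrightarrow> E \<omega> = F \<omega>"
  shows "pr q E = pr q F"
proof -
  have "{\<omega>. E \<omega>} \<inter> set_pmf q = {\<omega>. F \<omega>} \<inter> set_pmf q" using assms by auto
  then show ?thesis unfolding pr_def by (metis measure_Int_set_pmf)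
qed

lemma cpr_cong_pmf:
  assumes "\<And>\<omega>. \<omega> \<in> set_pmf q \<Longrightarrow> C \<omega> = C' \<omega>"
    and "\<And>\<omega>. \<omega> \<in> set_pmf q \<Longrightarrow> C \<omega> \<Longrightarrow> E \<omega> = E' \<omega>"
  shows "cpr q E C = cpr q E' C'"
proof -
  have "pr q (\<lambda>\<omega>. E \<omega> \<and> C \<omega>) = pr q (\<lambda>\<omega>. E' \<omega> \<and> C' \<omega>)" "pr q C = pr q C'"
    using assms by (auto intro: pr_cong_pmf)
  then show ?thesis unfolding cpr_def by simp
qed

lemma pr_nonneg: "pr q E \<ge> 0"
  unfolding pr_def by simp

lemma pr_mono:
  assumes "\<And>\<omega>. E \<omega> \<Longrightarrow> F \<omega>"
  shows "pr q E \<le> pr q F"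
  unfolding pr_def using assms by (intro measure_pmf.finite_measure_mono) auto

lemma pr_split: "pr q E = pr q (\<lambda>\<omega>. B \<omega> \<and> E \<omega>) + pr q (\<lambda>\<omega>. \<not> B \<omega> \<and> E \<omega>)"
proof -
  have "{\<omega>. E \<omega>} = {\<omega>. B \<omega> \<and> E \<omega>} \<union> {\<omega>. \<not> B \<omega> \<and> E \<omega>}" by auto
  moreover have "{\<omega>. B \<omega> \<and> E \<omega>} \<inter> {\<omega>. \<not> B \<omega> \<and> E \<omega>} = {}" by auto
  ultimately show ?thesis
    unfolding pr_def by (simp add: measure_pmf.finite_measure_Union)
qed

lemma pr_pos_of_cpr_pos:
  assumes "cpr q E C > 0"
  shows "pr q (\<lambda>\<omega>. E \<omega> \<and> C \<omega>) > 0"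
  using assms pr_nonneg[of q C] unfolding cpr_def by (auto simp: zero_less_divide_iff)

lemma cpr_odds: "cpr q A C / (1 - cpr q A C) = pr q (\<lambda>\<omega>. A \<omega> \<and> C \<omega>) / pr q (\<lambda>\<omega>. \<not> A \<omega> \<and> C \<omega>)"
proof -
  let ?a = "pr q (\<lambda>\<omega>. A \<omega> \<and> C \<omega>)" and ?b = "pr q (\<lambda>\<omega>. \<not> A \<omega> \<and> C \<omega>)"
  have C: "pr q C = ?a + ?b" by (rule pr_split)
  show ?thesis
  proof (cases "?a + ?b = 0")
    case True
    then have "?a = 0" using pr_nonneg[of q] by (metis add_nonneg_eq_0_iff)
    then show ?thesis unfolding cpr_def C by simp
  next
    case False
    then have "1 - ?a / (?a + ?b) = ?b / (?a + ?b)" by (simp add: field_simps)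
    with False show ?thesis unfolding cpr_def C by auto
  qed
qed

lemma cpr_cond_indep:
  assumes indep: "pr q (\<lambda>\<omega>. B \<omega> \<and> A \<omega> \<and> C \<omega>) * pr q C
                = pr q (\<lambda>\<omega>. B \<omega> \<and> C \<omega>) * pr q (\<lambda>\<omega>. A \<omega> \<and> C \<omega>)"
    and pos: "pr q (\<lambda>\<omega>. B \<omega> \<and> C \<omega>) > 0"
  shows "cpr q A (\<lambda>\<omega>. B \<omega> \<and> C \<omega>) = cpr q A C"
proof -
  have "pr q (\<lambda>\<omega>. B \<omega> \<and> C \<omega>) \<le> pr q C" by (rule pr_mono) simp
  with pos have "pr q C > 0" by simp
  moreover have "pr q (\<lambda>\<omega>. A \<omega> \<and> B \<omega> \<and> C \<omega>) = pr q (\<lambda>\<omega>. B \<omega> \<and> A \<omega> \<and> C \<omega>)"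
    by (rule pr_cong_pmf) auto
  ultimately show ?thesis
    unfolding cpr_def using indep pos by (simp add: field_simps)
qed

lemma odds_ratio_eq_risk_ratio:
  fixes p11 p01 p10 p00 a1 a0 :: real
  assumes "0 \<le> p11" "0 \<le> p01" "0 \<le> p10" "0 \<le> p00"
    and "p11 \<le> a1" "p10 \<le> a1" "p01 \<le> a0" "p00 \<le> a0"
    and "p10 + p00 > 0" and proportional: "p10 / a1 = p00 / a0"
  shows "(p11 / p01) / (p10 / p00) = (p11 / a1) / (p01 / a0)"
proof (cases "a1 = 0 \<or> a0 = 0")
  case True
  then show ?thesis using assms by auto
next
  case False
  then have "a1 > 0" "a0 > 0" using assms by auto
  with proportional have cross: "p10 * a0 = p00 * a1" by (simp add: field_simps)
  with \<open>p10 + p00 > 0\<close> \<open>a1 > 0\<close> \<open>a0 > 0\<close> have "p10 > 0" "p00 > 0"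
    using assms(3,4) by (smt (verit) mult_eq_0_iff)+
  moreover have "p00 * p11 * (a1 * p01) = a0 * p11 * (p01 * p10)" using cross by algebra
  ultimately show ?thesis using \<open>a1 > 0\<close> \<open>a0 > 0\<close> by (cases "p01 = 0") (simp_all add: frac_eq_eq)
qed

lemma participant_strata_positive:
  assumes pos1: "cpr q (\<lambda>\<omega>. vYrec \<omega> \<and> vD \<omega>) vS > 0" "cpr q (\<lambda>\<omega>. \<not> vYrec \<omega> \<and> vD \<omega>) vS > 0"
    and pos2: "\<And>y. pr q (\<lambda>\<omega>. vD \<omega> \<and> vS \<omega> \<and> vYrec \<omega> = y) > 0 \<Longrightarrow>
      cpr q vDelta (\<lambda>\<omega>. vD \<omega> \<and> vS \<omega> \<and> vYrec \<omega> = y) > 0"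
    and recY: "\<forall>\<omega>\<in>set_pmf q. vD \<omega> \<and> vS \<omega> \<longrightarrow> vYrec \<omega> = vY \<omega>"
  shows "pr q (\<lambda>\<omega>. vDelta \<omega> \<and> vD \<omega> \<and> vS \<omega> \<and> vY \<omega> = y) > 0"
proof -
  have "pr q (\<lambda>\<omega>. (vYrec \<omega> = y \<and> vD \<omega>) \<and> vS \<omega>) > 0"
    using pos1 by (cases y) (auto dest: pr_pos_of_cpr_pos)
  also have "pr q (\<lambda>\<omega>. (vYrec \<omega> = y \<and> vD \<omega>) \<and> vS \<omega>) = pr q (\<lambda>\<omega>. vD \<omega> \<and> vS \<omega> \<and> vYrec \<omega> = y)"
    by (rule pr_cong_pmf) auto
  finally have "cpr q vDelta (\<lambda>\<omega>. vD \<omega> \<and> vS \<omega> \<and> vYrec \<omega> = y) > 0"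
    by (rule pos2)
  then have "pr q (\<lambda>\<omega>. vDelta \<omega> \<and> vD \<omega> \<and> vS \<omega> \<and> vYrec \<omega> = y) > 0"
    by (rule pr_pos_of_cpr_pos)
  also have "pr q (\<lambda>\<omega>. vDelta \<omega> \<and> vD \<omega> \<and> vS \<omega> \<and> vYrec \<omega> = y)
           = pr q (\<lambda>\<omega>. vDelta \<omega> \<and> vD \<omega> \<and> vS \<omega> \<and> vY \<omega> = y)"
    using recY by (intro pr_cong_pmf) auto
  finally show ?thesis .
qed

lemma muP_eq_cpr_vA:
  assumes recA: "\<forall>\<omega>\<in>set_pmf q. vD \<omega> \<and> vS \<omega> \<and> vDelta \<omega> \<longrightarrow> vArec \<omega> = vA \<omega>"
    and recY: "\<forall>\<omega>\<in>set_pmf q. vD \<omega> \<and> vS \<omega> \<longrightarrow> vYrec \<omega> = vY \<omega>"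
    and ciS: "pr q (\<lambda>\<omega>. vS \<omega> \<and> vA \<omega> \<and> vD \<omega> \<and> vY \<omega> = y) * pr q (\<lambda>\<omega>. vD \<omega> \<and> vY \<omega> = y)
      = pr q (\<lambda>\<omega>. vS \<omega> \<and> vD \<omega> \<and> vY \<omega> = y) * pr q (\<lambda>\<omega>. vA \<omega> \<and> vD \<omega> \<and> vY \<omega> = y)"
    and ciDelta: "pr q (\<lambda>\<omega>. vDelta \<omega> \<and> vA \<omega> \<and> vD \<omega> \<and> vS \<omega> \<and> vY \<omega> = y)
        * pr q (\<lambda>\<omega>. vD \<omega> \<and> vS \<omega> \<and> vY \<omega> = y)
      = pr q (\<lambda>\<omega>. vDelta \<omega> \<and> vD \<omega> \<and> vS \<omega> \<and> vY \<omega> = y)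
        * pr q (\<lambda>\<omega>. vA \<omega> \<and> vD \<omega> \<and> vS \<omega> \<and> vY \<omega> = y)"
    and pos: "pr q (\<lambda>\<omega>. vDelta \<omega> \<and> vD \<omega> \<and> vS \<omega> \<and> vY \<omega> = y) > 0"
  shows "muP q y = cpr q vA (\<lambda>\<omega>. vD \<omega> \<and> vY \<omega> = y)"
proof -
  have "pr q (\<lambda>\<omega>. vDelta \<omega> \<and> vD \<omega> \<and> vS \<omega> \<and> vY \<omega> = y) \<le> pr q (\<lambda>\<omega>. vS \<omega> \<and> vD \<omega> \<and> vY \<omega> = y)"
    by (rule pr_mono) simp
  with pos have posS: "pr q (\<lambda>\<omega>. vS \<omega> \<and> vD \<omega> \<and> vY \<omega> = y) > 0" by simp
  have "muP q y = cpr q vA (\<lambda>\<omega>. vDelta \<omega> \<and> vD \<omega> \<and> vS \<omega> \<and> vY \<omega> = y)"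
    unfolding muP_def using recA recY by (intro cpr_cong_pmf) auto
  also have "\<dots> = cpr q vA (\<lambda>\<omega>. vD \<omega> \<and> vS \<omega> \<and> vY \<omega> = y)"
    using ciDelta pos by (rule cpr_cond_indep)
  also have "\<dots> = cpr q vA (\<lambda>\<omega>. vS \<omega> \<and> vD \<omega> \<and> vY \<omega> = y)"
    by (rule cpr_cong_pmf) auto
  also have "\<dots> = cpr q vA (\<lambda>\<omega>. vD \<omega> \<and> vY \<omega> = y)"
    using ciS posS by (rule cpr_cond_indep)
  finally show ?thesis .
qed

lemma ORP_eq_RRF:
  assumes mu: "\<And>y. muP q y = cpr q vA (\<lambda>\<omega>. vD \<omega> \<and> vY \<omega> = y)"
    and exch: "cpr q (\<lambda>\<omega>. \<not> vY \<omega> \<and> vD \<omega>) vA = cpr q (\<lambda>\<omega>. \<not> vY \<omega> \<and> vD \<omega>) (\<lambda>\<omega>. \<not> vA \<omega>)"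
    and noncases: "pr q (\<lambda>\<omega>. vD \<omega> \<and> \<not> vY \<omega>) > 0"
  shows "ORP q = RRF q"
proof -
  define p where "p a y = pr q (\<lambda>\<omega>. vA \<omega> = a \<and> vD \<omega> \<and> vY \<omega> = y)" for a y
  have odds: "muP q y / (1 - muP q y) = p True y / p False y" for y
    unfolding mu cpr_odds p_def by simp
  have RR: "RRF q = (p True True / pr q vA) / (p False True / pr q (\<lambda>\<omega>. \<not> vA \<omega>))"
    unfolding RRF_def cpr_def p_def by (simp add: conj_ac)
  have proportional: "p True False / pr q vA = p False False / pr q (\<lambda>\<omega>. \<not> vA \<omega>)"
    using exch unfolding cpr_def p_def by (simp add: conj_ac)
  have "pr q (\<lambda>\<omega>. vD \<omega> \<and> \<not> vY \<omega>) = p True False + p False False"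
    unfolding p_def by (subst pr_split[where B = vA]) (simp add: conj_ac)
  with noncases have "p True False + p False False > 0" by simp
  then show ?thesis
    unfolding ORP_def odds RR using proportional
    by (intro odds_ratio_eq_risk_ratio) (auto simp: p_def pr_nonneg intro: pr_mono)
qed

theorem theorem1:
  fixes PX :: "(real ^ 'r) measure" and K :: "real ^ 'r \<Rightarrow> indiv pmf"
  assumes PX: "prob_space PX" "sets PX = sets borel"
  assumes pos1: "AE x in PX. pr (K x) (\<lambda>\<omega>. vD \<omega> \<and> vS \<omega>) > 0 \<longrightarrow>
      cpr (K x) (\<lambda>\<omega>. vYrec \<omega> \<and> vD \<omega>) vS > 0 \<and>
      cpr (K x) (\<lambda>\<omega>. \<not> vYrec \<omega> \<and> vD \<omega>) vS > 0"
  assumes pos2: "AE x in PX. pr (K x) (\<lambda>\<omega>. vD \<omega> \<and> vS \<omega>) > 0 \<longrightarrow>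
      (\<forall>y. pr (K x) (\<lambda>\<omega>. vD \<omega> \<and> vS \<omega> \<and> vYrec \<omega> = y) > 0 \<longrightarrow>
         cpr (K x) vDelta (\<lambda>\<omega>. vD \<omega> \<and> vS \<omega> \<and> vYrec \<omega> = y) > 0)"
  assumes pos3: "AE x in PX. \<forall>y. pr (K x) (\<lambda>\<omega>. vD \<omega> \<and> vY \<omega> = y) > 0 \<longrightarrow>
         cpr (K x) vS (\<lambda>\<omega>. vD \<omega> \<and> vY \<omega> = y) > 0"
  assumes ciS: "AE x in PX. \<forall>y a s.
      pr (K x) (\<lambda>\<omega>. vS \<omega> = s \<and> vA \<omega> = a \<and> vD \<omega> \<and> vY \<omega> = y) * pr (K x) (\<lambda>\<omega>. vD \<omega> \<and> vY \<omega> = y)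
    = pr (K x) (\<lambda>\<omega>. vS \<omega> = s \<and> vD \<omega> \<and> vY \<omega> = y) * pr (K x) (\<lambda>\<omega>. vA \<omega> = a \<and> vD \<omega> \<and> vY \<omega> = y)"
  assumes ciDelta: "AE x in PX. \<forall>y a d.
      pr (K x) (\<lambda>\<omega>. vDelta \<omega> = d \<and> vA \<omega> = a \<and> vD \<omega> \<and> vS \<omega> \<and> vY \<omega> = y)
        * pr (K x) (\<lambda>\<omega>. vD \<omega> \<and> vS \<omega> \<and> vY \<omega> = y)
    = pr (K x) (\<lambda>\<omega>. vDelta \<omega> = d \<and> vD \<omega> \<and> vS \<omega> \<and> vY \<omega> = y)
        * pr (K x) (\<lambda>\<omega>. vA \<omega> = a \<and> vD \<omega> \<and> vS \<omega> \<and> vY \<omega> = y)"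
  assumes exch: "AE x in PX. cpr (K x) (\<lambda>\<omega>. \<not> vY \<omega> \<and> vD \<omega>) vA
                          = cpr (K x) (\<lambda>\<omega>. \<not> vY \<omega> \<and> vD \<omega>) (\<lambda>\<omega>. \<not> vA \<omega>)"
  assumes recA: "AE x in PX. \<forall>\<omega>\<in>set_pmf (K x). vD \<omega> \<and> vS \<omega> \<and> vDelta \<omega> \<longrightarrow> vArec \<omega> = vA \<omega>"
  assumes recY: "AE x in PX. \<forall>\<omega>\<in>set_pmf (K x). vD \<omega> \<and> vS \<omega> \<longrightarrow> vYrec \<omega> = vY \<omega>"
  shows "AE x in PX. pr (K x) (\<lambda>\<omega>. vD \<omega> \<and> vS \<omega>) > 0 \<longrightarrow> ORP (K x) = RRF (K x)"
  using pos1 pos2 ciS ciDelta exch recA recY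
proof eventually_elim
  case (elim x)
  show ?case
  proof
    assume "pr (K x) (\<lambda>\<omega>. vD \<omega> \<and> vS \<omega>) > 0"
    then have pos: "pr (K x) (\<lambda>\<omega>. vDelta \<omega> \<and> vD \<omega> \<and> vS \<omega> \<and> vY \<omega> = y) > 0" for y
      using elim(1,2,7) by (intro participant_strata_positive) auto
    have "muP (K x) y = cpr (K x) vA (\<lambda>\<omega>. vD \<omega> \<and> vY \<omega> = y)" for y
      using elim(3)[rule_format, where y = y and a = True and s = True]
        elim(4)[rule_format, where y = y and a = True and d = True]
      by (intro muP_eq_cpr_vA elim(6,7) pos) simp_all
    moreover have "pr (K x) (\<lambda>\<omega>. vD \<omega> \<and> \<not> vY \<omega>) > 0"
      using pos[of False] by (rule less_le_trans) (rule pr_mono, simp)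
    ultimately show "ORP (K x) = RRF (K x)" using elim(5) by (intro ORP_eq_RRF)
  qed
qed

end
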